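(* (i) For all integers $j\geq 3$, $R_1^{\mathcal{BIP}}(3,j)=j$. (ii) For all integers $i\geq 5$ and $j\geq 3$, $R_1^{\mathcal{BIP}}(i,j)=2j-1$. Here $\mathcal{BIP}$ is the class of bipartite graphs.
   Context: All graphs are finite and simple. For a graph $G$ and a nonnegative integer $k$, a $k$-sparse $j$-set is a set of $j$ vertices of $G$ inducing a subgraph of maximum degree at most $k$; a $k$-dense $i$-set is a set of $i$ vertices of $G$ that is $k$-sparse in the complement of $G$. For a graph class $\mathcal{G}$, $R_k^{\mathcal{G}}(i,j)$ is the smallest natural number $n$ such that every graph on $n$ vertices in $\mathcal{G}$ has either a $k$-dense $i$-set or a $k$-sparse $j$-set. *)

theory Defs
  imports Main
begin

definition simple_graph :: "'a set \<Rightarrow> ('a \<Rightarrow> 'a \<Rightarrow> bool) \<Rightarrow> bool" where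
  "simple_graph V E \<longleftrightarrow> finite V \<and>
     (\<forall>x y. E x y \<longrightarrow> x \<in> V \<and> y \<in> V \<and> x \<noteq> y \<and> E y x)"

definition bipartite :: "'a set \<Rightarrow> ('a \<Rightarrow> 'a \<Rightarrow> bool) \<Rightarrow> bool" where
  "bipartite V E \<longleftrightarrow> (\<exists>A. A \<subseteq> V \<and> (\<forall>x y. E x y \<longrightarrow> (x \<in> A \<longleftrightarrow> y \<notin> A)))"

definition k_sparse :: "('a \<Rightarrow> 'a \<Rightarrow> bool) \<Rightarrow> nat \<Rightarrow> 'a set \<Rightarrow> bool" where
  "k_sparse E k S \<longleftrightarrow> (\<forall>v\<in>S. card {u\<in>S. E v u} \<le> k)"

definition compl_graph :: "('a \<Rightarrow> 'a \<Rightarrow> bool) \<Rightarrow> 'a \<Rightarrow> 'a \<Rightarrow> bool" where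
  "compl_graph E x y \<longleftrightarrow> x \<noteq> y \<and> \<not> E x y"

definition k_dense :: "('a \<Rightarrow> 'a \<Rightarrow> bool) \<Rightarrow> nat \<Rightarrow> 'a set \<Rightarrow> bool" where
  "k_dense E k S \<longleftrightarrow> k_sparse (compl_graph E) k S"

definition has_sparse_set :: "'a set \<Rightarrow> ('a \<Rightarrow> 'a \<Rightarrow> bool) \<Rightarrow> nat \<Rightarrow> nat \<Rightarrow> bool" where
  "has_sparse_set V E k j \<longleftrightarrow> (\<exists>S\<subseteq>V. card S = j \<and> k_sparse E k S)"

definition has_dense_set :: "'a set \<Rightarrow> ('a \<Rightarrow> 'a \<Rightarrow> bool) \<Rightarrow> nat \<Rightarrow> nat \<Rightarrow> bool" where
  "has_dense_set V E k i \<longleftrightarrow> (\<exists>S\<subseteq>V. card S = i \<and> k_dense E k S)"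

text \<open>R_k^BIP(i,j): least n such that every bipartite graph on n vertices
(w.l.o.g. on the vertex set {0..<n}) has a k-dense i-set or a k-sparse j-set.\<close>
definition ramsey_bip :: "nat \<Rightarrow> nat \<Rightarrow> nat \<Rightarrow> nat" where
  "ramsey_bip k i j = (LEAST n. \<forall>E :: nat \<Rightarrow> nat \<Rightarrow> bool.
      simple_graph {0..<n} E \<and> bipartite {0..<n} E \<longrightarrow>
      has_dense_set {0..<n} E k i \<or> has_sparse_set {0..<n} E k j)"

end

theory Submission
  imports Defs
begin

text \<open>A vertex with k + 1 neighbours spans, together with them, a k-dense (k + 2)-set; so a
graph without k-dense (k + 2)-sets is itself k-sparse, while the empty graph on fewer than j
vertices shows that j vertices are needed. For the second bound, one side of a bipartite graph
on 2j - 1 vertices is an independent j-set. Conversely, the complete bipartite graph with both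
sides of size at most j - 1 has no k-sparse j-set (a k-sparse set meeting both sides has at most
k vertices on each) and no k-dense set larger than 2k + 2 (each side is a clique of the
complement).\<close>

lemma ramsey_bip_eqI:
  assumes "\<And>E. simple_graph {0..<n} E \<Longrightarrow> bipartite {0..<n} E \<Longrightarrow>
      has_dense_set {0..<n} E k i \<or> has_sparse_set {0..<n} E k j"
    and "\<And>m. m < n \<Longrightarrow> \<exists>E. simple_graph {0..<m} E \<and> bipartite {0..<m} E \<and>
      \<not> has_dense_set {0..<m} E k i \<and> \<not> has_sparse_set {0..<m} E k j"
  shows "ramsey_bip k i j = n"
  unfolding ramsey_bip_def
proof (rule Least_equality)
  show "\<forall>E. simple_graph {0..<n} E \<and> bipartite {0..<n} E \<longrightarrow>
      has_dense_set {0..<n} E k i \<or> has_sparse_set {0..<n} E k j"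
    using assms(1) by blast
  show "n \<le> m" if "\<forall>E. simple_graph {0..<m} E \<and> bipartite {0..<m} E \<longrightarrow>
      has_dense_set {0..<m} E k i \<or> has_sparse_set {0..<m} E k j" for m
    using that assms(2)[of m] by (meson not_le)
qed

lemma has_sparse_set_card_le:
  assumes "finite V" "has_sparse_set V E k j"
  shows "j \<le> card V"
  using assms unfolding has_sparse_set_def by (metis card_mono)

lemma k_sparse_card_le_if_adjacent:
  assumes "k_sparse E k S" "finite S" "x \<in> S" "T \<subseteq> S" "\<And>y. y \<in> T \<Longrightarrow> E x y"
  shows "card T \<le> k"
proof -
  have "card T \<le> card {u\<in>S. E x u}"
    using assms(2,4,5) by (intro card_mono) auto
  also have "\<dots> \<le> k"
    using assms(1,3) unfolding k_sparse_def by blast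
  finally show ?thesis .
qed

lemma k_dense_card_le_if_independent:
  assumes "k_dense E k S" "finite S" "T \<subseteq> S" "\<And>x y. x \<in> T \<Longrightarrow> y \<in> T \<Longrightarrow> \<not> E x y"
  shows "card T \<le> Suc k"
proof (cases "T = {}")
  case False
  then obtain x where x: "x \<in> T" by blast
  have "card (T - {x}) \<le> k"
  proof (rule k_sparse_card_le_if_adjacent)
    show "k_sparse (compl_graph E) k S"
      using assms(1) unfolding k_dense_def .
    show "compl_graph E x y" if "y \<in> T - {x}" for y
      using that x assms(4) by (auto simp: compl_graph_def)
  qed (use x assms(2,3) in auto)
  then show ?thesis
    using x assms(2,3) finite_subset by (simp add: card_Diff_singleton)
qed simp

lemma k_dense_insert_neighbours:
  assumes "finite N" "card N \<le> Suc k" "\<And>u. u \<in> N \<Longrightarrow> E v u \<and> E u v"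
  shows "k_dense E k (insert v N)"
  unfolding k_dense_def k_sparse_def
proof
  fix w assume w: "w \<in> insert v N"
  show "card {u \<in> insert v N. compl_graph E w u} \<le> k"
  proof (cases "w \<in> N")
    case True
    have "card {u \<in> insert v N. compl_graph E w u} \<le> card (N - {w})"
      using True assms(1,3) by (intro card_mono) (auto simp: compl_graph_def)
    also have "\<dots> \<le> k"
      using True assms(1,2) by (simp add: card_Diff_singleton)
    finally show ?thesis .
  next
    case False
    then have "{u \<in> insert v N. compl_graph E w u} = {}"
      using w assms(3) by (auto simp: compl_graph_def)
    then show ?thesis by (metis card.empty zero_le)
  qed
qed

lemma has_dense_set_or_sparse_set_card:
  assumes "simple_graph V E"
  shows "has_dense_set V E k (Suc (Suc k)) \<or> has_sparse_set V E k (card V)"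
proof (cases "k_sparse E k V")
  case True
  then show ?thesis unfolding has_sparse_set_def by blast
next
  case False
  then obtain v where v: "v \<in> V" "Suc k \<le> card {u\<in>V. E v u}"
    unfolding k_sparse_def by (auto simp: not_le)
  then obtain N where N: "N \<subseteq> {u\<in>V. E v u}" "card N = Suc k"
    by (meson obtain_subset_with_card_n)
  have "finite N" and "v \<notin> N"
    using N assms card.infinite unfolding simple_graph_def by fastforce+
  moreover have "\<And>u. u \<in> N \<Longrightarrow> E v u \<and> E u v"
    using N assms unfolding simple_graph_def by blast
  ultimately have "k_dense E k (insert v N)" "card (insert v N) = Suc (Suc k)"
    using N(2) by (auto intro: k_dense_insert_neighbours)
  moreover have "insert v N \<subseteq> V" using N v by blast
  ultimately show ?thesis unfolding has_dense_set_def by blast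
qed

lemma bipartite_has_sparse_set:
  assumes "finite V" "bipartite V E" "2 * j - 1 \<le> card V"
  shows "has_sparse_set V E k j"
proof -
  obtain A where A: "A \<subseteq> V" "\<And>x y. E x y \<Longrightarrow> x \<in> A \<longleftrightarrow> y \<notin> A"
    using assms(2) unfolding bipartite_def by blast
  have "card V = card A + card (V - A)"
    using card_Diff_subset[OF finite_subset[OF A(1) assms(1)] A(1)] card_mono[OF assms(1) A(1)]
    by linarith
  then have "j \<le> card A \<or> j \<le> card (V - A)"
    using assms(3) by arith
  then obtain P where P: "P = A \<or> P = V - A" "j \<le> card P"
    by blast
  then obtain S where S: "S \<subseteq> P" "card S = j"
    by (meson obtain_subset_with_card_n)
  have "{u\<in>S. E v u} = {}" if "v \<in> S" for v
    using that S(1) P(1) A(2) by blast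
  then have "k_sparse E k S"
    unfolding k_sparse_def by (metis card.empty zero_le)
  then show ?thesis
    using S P A(1) unfolding has_sparse_set_def by blast
qed

definition complete_bipartite :: "nat \<Rightarrow> nat \<Rightarrow> nat \<Rightarrow> nat \<Rightarrow> bool" where
  "complete_bipartite a n x y \<longleftrightarrow> x < n \<and> y < n \<and> (x < a \<longleftrightarrow> \<not> y < a)"

lemma simple_graph_complete_bipartite: "simple_graph {0..<n} (complete_bipartite a n)"
  unfolding simple_graph_def complete_bipartite_def by auto

lemma bipartite_complete_bipartite: "bipartite {0..<n} (complete_bipartite a n)"
  unfolding bipartite_def complete_bipartite_def
  by (rule exI[of _ "{0..<min a n}"]) auto

lemma complete_bipartite_k_dense_card_le:
  assumes "S \<subseteq> {0..<n}" "k_dense (complete_bipartite a n) k S"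
  shows "card S \<le> 2 * k + 2"
proof -
  have fin: "finite S"
    using assms(1) finite_subset by blast
  have "card (S \<inter> {..<a}) \<le> Suc k" "card (S - {..<a}) \<le> Suc k"
    by (rule k_dense_card_le_if_independent[OF assms(2) fin]; auto simp: complete_bipartite_def)+
  then show ?thesis
    using card_Int_Diff[OF fin, of "{..<a}"] by linarith
qed

lemma complete_bipartite_k_sparse_cases:
  assumes "S \<subseteq> {0..<n}" "k_sparse (complete_bipartite a n) k S"
  shows "S \<subseteq> {..<a} \<or> S \<subseteq> {a..<n} \<or> card S \<le> 2 * k"
proof -
  have fin: "finite S"
    using assms(1) finite_subset by blast
  consider "S \<inter> {..<a} = {}" | "S - {..<a} = {}" | x y where "x \<in> S" "x < a" "y \<in> S" "\<not> y < a"
    by blast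
  then show ?thesis
  proof cases
    case 1
    then have "S \<subseteq> {a..<n}"
      using assms(1) by (auto simp: disjoint_iff not_less)
    then show ?thesis by blast
  next
    case 2
    then show ?thesis by auto
  next
    case 3
    have "card (S \<inter> {..<a}) \<le> k"
      by (rule k_sparse_card_le_if_adjacent[OF assms(2) fin \<open>y \<in> S\<close>])
        (use 3 assms(1) in \<open>auto simp: complete_bipartite_def\<close>)
    moreover have "card (S - {..<a}) \<le> k"
      by (rule k_sparse_card_le_if_adjacent[OF assms(2) fin \<open>x \<in> S\<close>])
        (use 3 assms(1) in \<open>auto simp: complete_bipartite_def\<close>)
    ultimately show ?thesis
      using card_Int_Diff[OF fin, of "{..<a}"] by linarith
  qed
qed

lemma ramsey_bip_Suc_Suc: "ramsey_bip k (Suc (Suc k)) j = j"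
proof (rule ramsey_bip_eqI)
  fix E assume "simple_graph {0..<j} E"
  then show "has_dense_set {0..<j} E k (Suc (Suc k)) \<or> has_sparse_set {0..<j} E k j"
    using has_dense_set_or_sparse_set_card[of "{0..<j}" E k] by simp
next
  fix m assume "m < j"
  let ?E = "\<lambda>_ _ :: nat. False"
  have "\<not> has_dense_set {0..<m} ?E k (Suc (Suc k))"
  proof
    assume "has_dense_set {0..<m} ?E k (Suc (Suc k))"
    then obtain S where S: "S \<subseteq> {0..<m}" "card S = Suc (Suc k)" "k_dense ?E k S"
      unfolding has_dense_set_def by blast
    have "card S \<le> Suc k"
      using S by (intro k_dense_card_le_if_independent[of ?E k S]) (auto intro: finite_subset)
    with S(2) show False by simp
  qed
  moreover have "\<not> has_sparse_set {0..<m} ?E k j"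
    using has_sparse_set_card_le[of "{0..<m}" ?E k j] \<open>m < j\<close> by auto
  moreover have "simple_graph {0..<m} ?E" "bipartite {0..<m} ?E"
    unfolding simple_graph_def bipartite_def by auto
  ultimately show "\<exists>E. simple_graph {0..<m} E \<and> bipartite {0..<m} E \<and>
      \<not> has_dense_set {0..<m} E k (Suc (Suc k)) \<and> \<not> has_sparse_set {0..<m} E k j"
    by blast
qed

lemma ramsey_bip_eq_2_mult_minus_1:
  assumes i: "2 * k + 3 \<le> i" and j: "2 * k + 1 \<le> j"
  shows "ramsey_bip k i j = 2 * j - 1"
proof (rule ramsey_bip_eqI)
  fix E assume "bipartite {0..<2 * j - 1} E"
  then show "has_dense_set {0..<2 * j - 1} E k i \<or> has_sparse_set {0..<2 * j - 1} E k j"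
    by (simp add: bipartite_has_sparse_set)
next
  fix m assume m: "m < 2 * j - 1"
  define a where "a = m div 2"
  have sides: "a < j" "m - a < j"
    using m unfolding a_def by presburger+
  let ?E = "complete_bipartite a m"
  have "\<not> has_dense_set {0..<m} ?E k i"
  proof
    assume "has_dense_set {0..<m} ?E k i"
    then obtain S where S: "S \<subseteq> {0..<m}" "card S = i" "k_dense ?E k S"
      unfolding has_dense_set_def by blast
    have "card S \<le> 2 * k + 2"
      by (rule complete_bipartite_k_dense_card_le[OF S(1,3)])
    with S(2) i show False by simp
  qed
  moreover have "\<not> has_sparse_set {0..<m} ?E k j"
  proof
    assume "has_sparse_set {0..<m} ?E k j"
    then obtain S where S: "S \<subseteq> {0..<m}" "card S = j" "k_sparse ?E k S"
      unfolding has_sparse_set_def by blast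
    from complete_bipartite_k_sparse_cases[OF S(1,3)] show False
    proof (elim disjE)
      assume "S \<subseteq> {..<a}"
      then have "card S \<le> a"
        using card_mono[of "{..<a}" S] by simp
      with S(2) sides show False by simp
    next
      assume "S \<subseteq> {a..<m}"
      then have "card S \<le> m - a"
        using card_mono[of "{a..<m}" S] by simp
      with S(2) sides show False by simp
    next
      assume "card S \<le> 2 * k"
      with S(2) j show False by simp
    qed
  qed
  moreover have "simple_graph {0..<m} ?E" "bipartite {0..<m} ?E"
    by (rule simple_graph_complete_bipartite bipartite_complete_bipartite)+
  ultimately show "\<exists>E. simple_graph {0..<m} E \<and> bipartite {0..<m} E \<and>
      \<not> has_dense_set {0..<m} E k i \<and> \<not> has_sparse_set {0..<m} E k j"
    by blast
qed

theorem theorem5p2: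
  shows "(\<forall>j::nat. j \<ge> 3 \<longrightarrow> ramsey_bip 1 3 j = j) \<and>
         (\<forall>i j::nat. i \<ge> 5 \<longrightarrow> j \<ge> 3 \<longrightarrow> ramsey_bip 1 i j = 2 * j - 1)"
  using ramsey_bip_Suc_Suc[of 1] ramsey_bip_eq_2_mult_minus_1[of 1] by (simp add: numeral_eq_Suc)

end
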